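(* Let $T$ be a lifted graph, $F\colon T\to T$ a continuous sun-like map of degree 1, ${\cal P}$ a basic partition of $F$ and ${\cal G}$ its covering graph, and let $\alpha,\beta$ be vertices of ${\cal G}$. (i) All arrows starting from $\alpha$, except at most one, end at a vertex of the basis. (ii) If $\alpha\to\beta$ and $H(\beta)>0$, then $H(\beta)=H(\alpha)+1$.
   Context: A lifted graph is a connected topological space $T$ with a homeomorphism $h\colon\mathbb R\to h(\mathbb R)\subset T$ and a homeomorphism $\tau\colon T\to T$ such that $\tau(h(x))=h(x+1)$, the closure of each connected component of $T\setminus h(\mathbb R)$ is a topological finite graph meeting $h(\mathbb R)$ in exactly one point, and only finitely many such components have closure meeting $h([0,1])$. Identify $h(\mathbb R)$ with $\mathbb R$, write $x+m:=\tau^m(x)$; $r_{\mathbb R}\colon T\to\mathbb R$ is the identity on $\mathbb R$ and maps a component $C$ of $T\setminus\mathbb R$ to the point $\overline C\cap\mathbb R$. $F$ has degree 1 if $F(x+1)=F(x)+1$. Let $T_{\mathbb R}:=\overline{\bigcup_{n\ge0}F^n(\mathbb R)}$, $X:=\overline{T\setminus T_{\mathbb R}}\cap r_{\mathbb R}^{-1}([0,1))$. $F$ is sun-like if $(T\setminus T_{\mathbb R})\cap r_{\mathbb R}^{-1}([0,1))$ consists of finitely many intervals with pairwise disjoint closures $X^i$, $i\in\Lambda$ (branches), each a compact interval meeting $T_{\mathbb R}$ in one endpoint $\min X^i$ (fixing the order of $X^i$). A basic partition is a finite family ${\cal P}=\{X^i_j\}$ of pairwise disjoint nonempty compact intervals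 $X^i_1<\dots<X^i_{N_i}$ in $X^i$, with $\ell(X^i_j)\in\Lambda$, $p(X^i_j)\in\mathbb Z$, such that $F(X^i_j)\subset(X^{\ell(X^i_j)}+p(X^i_j))\cup\mathrm{Int}(T_{\mathbb R})$, $F(\min X^i_j)=\min X^{\ell(X^i_j)}+p(X^i_j)$, and $F(X\setminus\bigcup X^i_j)\cap(X+\mathbb Z)=\emptyset$. For $A_0,\dots,A_n\in{\cal P}$, $\langle A_0\dots A_n\rangle:=F^n(\{x\in T: F^i(x)\in A_i+\mathbb Z,\ 0\le i\le n\})\cap X$. $A_0\dots A_n\sim B_0\dots B_m$ iff for some $k\le\min(n,m)$, $A_{n-i}=B_{m-i}$ ($0\le i\le k$) and $\langle A_0\dots A_{n-k}\rangle=A_{n-k}=B_{m-k}=\langle B_0\dots B_{m-k}\rangle$. The covering graph ${\cal G}$: vertices are classes $A_0\dots A_n/\!\sim$ with $\langle A_0\dots A_n\rangle\ne\emptyset$; arrow $\alpha\to\beta$ iff $\alpha=A_0\dots A_n/\!\sim$, $\beta=A_0\dots A_nA_{n+1}/\!\sim$ for some $A_i\in{\cal P}$. The significant part of $A_0\dots A_n$ is $A_i\dots A_n$ with $i$ the largest index such that $A_0\dots A_n\sim A_i\dots A_n$; the height of the class $\alpha$ is $H(\alpha):=n-i$. The basis is the set of vertices of height $0$, i.e. $\{A/\!\sim: A\in{\cal P}\}$. *)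

theory Defs
  imports "HOL-Analysis.Analysis"
begin

(* x + m := tau^m(x), m an integer (tau is a homeomorphism of T) *)
definition shift :: "'a topology \<Rightarrow> ('a \<Rightarrow> 'a) \<Rightarrow> int \<Rightarrow> 'a \<Rightarrow> 'a" where
  "shift T \<tau> m x = (if 0 \<le> m then (\<tau> ^^ nat m) x
                      else (inv_into (topspace T) \<tau> ^^ nat (- m)) x)"

definition plusZ :: "'a topology \<Rightarrow> ('a \<Rightarrow> 'a) \<Rightarrow> 'a set \<Rightarrow> 'a set" where
  "plusZ T \<tau> A = (\<Union>m::int. shift T \<tau> m ` A)"

definition top_finite_graph :: "'a topology \<Rightarrow> bool" where
  "top_finite_graph S \<longleftrightarrow> Hausdorff_space S \<and>
     (\<exists>V E. finite V \<and> finite E \<and> V \<subseteq> topspace S \<and>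
        (\<forall>e\<in>E. continuous_map (subtopology euclideanreal {0..1}) S e \<and>
                e 0 \<in> V \<and> e 1 \<in> V \<and> inj_on e {0<..<1} \<and>
                e ` {0<..<1} \<inter> V = {}) \<and>
        (\<forall>e\<in>E. \<forall>e'\<in>E. e \<noteq> e' \<longrightarrow> e ` {0<..<1} \<inter> e' ` {0<..<1} = {}) \<and>
        topspace S = V \<union> (\<Union>e\<in>E. e ` {0<..<1}))"

definition lifted_graph :: "'a topology \<Rightarrow> (real \<Rightarrow> 'a) \<Rightarrow> ('a \<Rightarrow> 'a) \<Rightarrow> bool" where
  "lifted_graph T h \<tau> \<longleftrightarrow>
     connected_space T \<and>
     homeomorphic_map euclideanreal (subtopology T (range h)) h \<and>
     homeomorphic_map T T \<tau> \<and>
     (\<forall>x. \<tau> (h x) = h (x + 1)) \<and>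
     (\<forall>C \<in> connected_components_of (subtopology T (topspace T - range h)).
        top_finite_graph (subtopology T (T closure_of C)) \<and>
        (\<exists>!y. y \<in> T closure_of C \<inter> range h)) \<and>
     finite {C \<in> connected_components_of (subtopology T (topspace T - range h)).
               T closure_of C \<inter> h ` {0..1} \<noteq> {}}"

(* the retraction r_R : T -> R (values in R, identified with h(R)) *)
definition rR :: "'a topology \<Rightarrow> (real \<Rightarrow> 'a) \<Rightarrow> 'a \<Rightarrow> real" where
  "rR T h x = (if x \<in> range h then inv h x
     else (THE t. h t \<in> T closure_of
             (connected_component_of_set (subtopology T (topspace T - range h)) x)))"

definition degree_one :: "'a topology \<Rightarrow> ('a \<Rightarrow> 'a) \<Rightarrow> ('a \<Rightarrow> 'a) \<Rightarrow> bool" where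
  "degree_one T \<tau> F \<longleftrightarrow> (\<forall>x\<in>topspace T. F (\<tau> x) = \<tau> (F x))"

definition TR :: "'a topology \<Rightarrow> (real \<Rightarrow> 'a) \<Rightarrow> ('a \<Rightarrow> 'a) \<Rightarrow> 'a set" where
  "TR T h F = T closure_of (\<Union>n. (F ^^ n) ` range h)"

definition XX :: "'a topology \<Rightarrow> (real \<Rightarrow> 'a) \<Rightarrow> ('a \<Rightarrow> 'a) \<Rightarrow> 'a set" where
  "XX T h F = T closure_of (topspace T - TR T h F) \<inter> {x \<in> topspace T. rR T h x \<in> {0..<1}}"

(* sun-like, with the branches X^i = gamma i ` {0..1}, i in Lambda, where gamma i is a
   homeomorphism of [0,1] onto X^i with gamma i 0 = min X^i (this fixes the order of X^i) *)
definition sun_like :: "'a topology \<Rightarrow> (real \<Rightarrow> 'a) \<Rightarrow> ('a \<Rightarrow> 'a) \<Rightarrow> 'i set \<Rightarrow> ('i \<Rightarrow> real \<Rightarrow> 'a) \<Rightarrow> bool" where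
  "sun_like T h F \<Lambda> \<gamma> \<longleftrightarrow> finite \<Lambda> \<and>
     (\<exists>I. (topspace T - TR T h F) \<inter> {x \<in> topspace T. rR T h x \<in> {0..<1}} = (\<Union>i\<in>\<Lambda>. I i) \<and>
        (\<forall>i\<in>\<Lambda>. (\<exists>J::real set. is_interval J \<and>
                      subtopology T (I i) homeomorphic_space subtopology euclideanreal J) \<and>
                  T closure_of (I i) = \<gamma> i ` {0..1}) \<and>
        (\<forall>i\<in>\<Lambda>. homeomorphic_map (subtopology euclideanreal {0..1})
                      (subtopology T (\<gamma> i ` {0..1})) (\<gamma> i) \<and>
                  \<gamma> i ` {0..1} \<inter> TR T h F = {\<gamma> i 0}) \<and>
        (\<forall>i\<in>\<Lambda>. \<forall>j\<in>\<Lambda>. i \<noteq> j \<longrightarrow> \<gamma> i ` {0..1} \<inter> \<gamma> j ` {0..1} = {}))"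

definition basic_partition :: "'a topology \<Rightarrow> (real \<Rightarrow> 'a) \<Rightarrow> ('a \<Rightarrow> 'a) \<Rightarrow> ('a \<Rightarrow> 'a) \<Rightarrow>
    'i set \<Rightarrow> ('i \<Rightarrow> real \<Rightarrow> 'a) \<Rightarrow> 'a set set \<Rightarrow> ('a set \<Rightarrow> 'i) \<Rightarrow> ('a set \<Rightarrow> int) \<Rightarrow> bool" where
  "basic_partition T h \<tau> F \<Lambda> \<gamma> P l p \<longleftrightarrow> finite P \<and>
     (\<forall>A\<in>P. A \<noteq> {} \<and> l A \<in> \<Lambda> \<and>
        (\<exists>i\<in>\<Lambda>. \<exists>a b. 0 \<le> a \<and> a \<le> b \<and> b \<le> 1 \<and> A = \<gamma> i ` {a..b} \<and>
            F (\<gamma> i a) = shift T \<tau> (p A) (\<gamma> (l A) 0)) \<and>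
        F ` A \<subseteq> (shift T \<tau> (p A) ` (\<gamma> (l A) ` {0..1})) \<union> (T interior_of TR T h F)) \<and>
     (\<forall>A\<in>P. \<forall>B\<in>P. A \<noteq> B \<longrightarrow> A \<inter> B = {}) \<and>
     F ` (XX T h F - \<Union>P) \<inter> plusZ T \<tau> (XX T h F) = {}"

definition cyl :: "'a topology \<Rightarrow> (real \<Rightarrow> 'a) \<Rightarrow> ('a \<Rightarrow> 'a) \<Rightarrow> ('a \<Rightarrow> 'a) \<Rightarrow> 'a set list \<Rightarrow> 'a set" where
  "cyl T h \<tau> F As = (F ^^ (length As - 1)) `
      {x \<in> topspace T. \<forall>i<length As. (F ^^ i) x \<in> plusZ T \<tau> (As ! i)} \<inter> XX T h F"

definition csim :: "'a topology \<Rightarrow> (real \<Rightarrow> 'a) \<Rightarrow> ('a \<Rightarrow> 'a) \<Rightarrow> ('a \<Rightarrow> 'a) \<Rightarrow> 'a set list \<Rightarrow> 'a set list \<Rightarrow> bool" where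
  "csim T h \<tau> F As Bs \<longleftrightarrow> (let n = length As - 1; m = length Bs - 1 in
     \<exists>k \<le> min n m. (\<forall>i\<le>k. As ! (n - i) = Bs ! (m - i)) \<and>
        cyl T h \<tau> F (take (n - k + 1) As) = As ! (n - k) \<and>
        As ! (n - k) = Bs ! (m - k) \<and>
        Bs ! (m - k) = cyl T h \<tau> F (take (m - k + 1) Bs))"

definition cls :: "'a topology \<Rightarrow> (real \<Rightarrow> 'a) \<Rightarrow> ('a \<Rightarrow> 'a) \<Rightarrow> ('a \<Rightarrow> 'a) \<Rightarrow> 'a set set \<Rightarrow> 'a set list \<Rightarrow> 'a set list set" where
  "cls T h \<tau> F P As = {Bs. Bs \<noteq> [] \<and> set Bs \<subseteq> P \<and> csim T h \<tau> F As Bs}"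

definition cg_vertices :: "'a topology \<Rightarrow> (real \<Rightarrow> 'a) \<Rightarrow> ('a \<Rightarrow> 'a) \<Rightarrow> ('a \<Rightarrow> 'a) \<Rightarrow> 'a set set \<Rightarrow> 'a set list set set" where
  "cg_vertices T h \<tau> F P = {cls T h \<tau> F P As | As. As \<noteq> [] \<and> set As \<subseteq> P \<and> cyl T h \<tau> F As \<noteq> {}}"

definition cg_arrow :: "'a topology \<Rightarrow> (real \<Rightarrow> 'a) \<Rightarrow> ('a \<Rightarrow> 'a) \<Rightarrow> ('a \<Rightarrow> 'a) \<Rightarrow> 'a set set \<Rightarrow>
    'a set list set \<Rightarrow> 'a set list set \<Rightarrow> bool" where
  "cg_arrow T h \<tau> F P \<alpha> \<beta> \<longleftrightarrow> \<alpha> \<in> cg_vertices T h \<tau> F P \<and> \<beta> \<in> cg_vertices T h \<tau> F P \<and>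
     (\<exists>As A. As \<noteq> [] \<and> set As \<subseteq> P \<and> A \<in> P \<and>
        \<alpha> = cls T h \<tau> F P As \<and> \<beta> = cls T h \<tau> F P (As @ [A]))"

definition word_height :: "'a topology \<Rightarrow> (real \<Rightarrow> 'a) \<Rightarrow> ('a \<Rightarrow> 'a) \<Rightarrow> ('a \<Rightarrow> 'a) \<Rightarrow> 'a set list \<Rightarrow> nat" where
  "word_height T h \<tau> F As =
     (length As - 1) - (GREATEST i. i < length As \<and> csim T h \<tau> F As (drop i As))"

definition cg_height :: "'a topology \<Rightarrow> (real \<Rightarrow> 'a) \<Rightarrow> ('a \<Rightarrow> 'a) \<Rightarrow> ('a \<Rightarrow> 'a) \<Rightarrow> 'a set list set \<Rightarrow> nat" where
  "cg_height T h \<tau> F \<alpha> = word_height T h \<tau> F (SOME As. As \<in> \<alpha>)"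

definition cg_basis :: "'a topology \<Rightarrow> (real \<Rightarrow> 'a) \<Rightarrow> ('a \<Rightarrow> 'a) \<Rightarrow> ('a \<Rightarrow> 'a) \<Rightarrow> 'a set set \<Rightarrow> 'a set list set set" where
  "cg_basis T h \<tau> F P = {\<alpha> \<in> cg_vertices T h \<tau> F P. cg_height T h \<tau> F \<alpha> = 0}"

end

theory Submission
  imports Defs
begin

text \<open>A cylinder \<open>\<langle>A\<^sub>0 \<dots> A\<^sub>n A\<rangle>\<close> depends only on \<open>\<langle>A\<^sub>0 \<dots> A\<^sub>n\<rangle>\<close> and \<open>A\<close>: it is
  \<open>F(\<langle>A\<^sub>0 \<dots> A\<^sub>n\<rangle> + \<int>) \<inter> (A + \<int>) \<inter> X\<close>, because \<open>X\<close> is a fundamental domain of the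
  translations and \<open>F\<close> commutes with them. By induction every cylinder is an initial segment
  of its last letter \<open>B\<close>. For a sun-like map, \<open>F\<close> sends such a connected piece, through the
  point of \<open>B\<close> mapped to \<open>min X\<^bsup>l(B)\<^esup> + p(B)\<close>, to a connected set which after translation lies
  in \<open>X\<^bsup>l(B)\<^esup> \<union> T\<^sub>\<real>\<close> and contains \<open>min X\<^bsup>l(B)\<^esup>\<close>; so it meets that branch in an initial
  segment, and an initial segment of a branch cuts at most one element of \<open>P\<close> properly.
  Since an arrow leaves the basis exactly when the new cylinder is a proper nonempty part of
  the new letter, this gives (i).

  For (ii), two words are equivalent iff they have the same significant part, the suffix
  starting at the last \<open>j\<close> with \<open>\<langle>A\<^sub>0 \<dots> A\<^sub>j\<rangle> = A\<^sub>j\<close>. Appending a letter \<open>A\<close> either resets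
  the significant part to \<open>A\<close> (height \<open>0\<close>) or extends it by \<open>A\<close> (height increased by one).\<close>

section \<open>Integer translations\<close>

lemma homeomorphic_map_funpow: "homeomorphic_map X X f \<Longrightarrow> homeomorphic_map X X (f ^^ n)"
  by (induction n) (auto simp: id_def[symmetric] intro: homeomorphic_map_compose)

locale deck_translation =
  fixes T :: "'a topology" and \<tau> :: "'a \<Rightarrow> 'a"
  assumes homeomorphic_translation: "homeomorphic_map T T \<tau>"
begin

abbreviation sh :: "int \<Rightarrow> 'a \<Rightarrow> 'a" where "sh \<equiv> shift T \<tau>"
abbreviation "\<sigma> \<equiv> inv_into (topspace T) \<tau>"
abbreviation "pZ \<equiv> plusZ T \<tau>"

lemma translation_image: "\<tau> ` topspace T = topspace T"
  using homeomorphic_imp_surjective_map[OF homeomorphic_translation] .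

lemma inverse_translation_in_topspace: "x \<in> topspace T \<Longrightarrow> \<sigma> x \<in> topspace T"
  by (metis inv_into_into translation_image)

lemma translation_inverse: "x \<in> topspace T \<Longrightarrow> \<tau> (\<sigma> x) = x"
  by (metis f_inv_into_f translation_image)

lemma inverse_translation: "x \<in> topspace T \<Longrightarrow> \<sigma> (\<tau> x) = x"
  by (meson homeomorphic_imp_injective_map homeomorphic_translation inv_into_f_f)

lemma homeomorphic_inverse_translation: "homeomorphic_map T T \<sigma>"
proof -
  obtain g where g: "homeomorphic_maps T T \<tau> g"
    using homeomorphic_translation homeomorphic_map_maps by blast
  then have "homeomorphic_map T T g" and "\<And>x. x \<in> topspace T \<Longrightarrow> g x = \<sigma> x"
    by (auto simp: homeomorphic_maps_map) (metis inverse_translation_in_topspace translation_inverse)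
  then show ?thesis using homeomorphic_map_eq by blast
qed

lemma homeomorphic_map_shift: "homeomorphic_map T T (sh m)"
  using homeomorphic_map_funpow[OF homeomorphic_translation, of "nat m"]
    homeomorphic_map_funpow[OF homeomorphic_inverse_translation, of "nat (- m)"]
  unfolding shift_def by (cases "0 \<le> m") (auto intro: homeomorphic_map_eq)

lemma continuous_map_shift: "continuous_map T T (sh m)"
  using homeomorphic_imp_continuous_map[OF homeomorphic_map_shift] .

lemma shift_in_topspace: "x \<in> topspace T \<Longrightarrow> sh m x \<in> topspace T"
  using homeomorphic_imp_surjective_map[OF homeomorphic_map_shift] by blast

lemma shift_0 [simp]: "sh 0 x = x"
  by (simp add: shift_def)

lemma shift_succ:
  assumes "x \<in> topspace T" shows "sh (m + 1) x = \<tau> (sh m x)"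
proof (cases "0 \<le> m")
  case True
  then have "nat (m + 1) = Suc (nat m)" by simp
  with True show ?thesis by (simp add: shift_def)
next
  case False
  then have "nat (- m) = Suc (nat (- (m + 1)))" by simp
  moreover have "(\<sigma> ^^ n) x \<in> topspace T" for n
    using assms by (induction n) (auto simp: inverse_translation_in_topspace)
  ultimately show ?thesis
    using False by (auto simp: shift_def translation_inverse)
qed

lemma shift_pred:
  assumes "x \<in> topspace T" shows "sh (m - 1) x = \<sigma> (sh m x)"
  using shift_succ[OF assms, of "m - 1"] inverse_translation shift_in_topspace assms by simp

lemma shift_add:
  assumes "x \<in> topspace T" shows "sh m (sh q x) = sh (m + q) x"
proof (induction m rule: int_induct[where k = 0])
  case (step1 i)
  then show ?case
    using shift_succ[OF shift_in_topspace[OF assms], of i q] shift_succ[OF assms, of "i + q"]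
    by (simp add: ac_simps)
next
  case (step2 i)
  then show ?case
    using shift_pred[OF shift_in_topspace[OF assms], of i q] shift_pred[OF assms, of "i + q"]
    by (simp add: algebra_simps)
qed simp

lemma shift_neg_cancel [simp]: "x \<in> topspace T \<Longrightarrow> sh (- m) (sh m x) = x"
  using shift_add[of x "- m" m] by simp

lemma plusZ_iff: "x \<in> pZ A \<longleftrightarrow> (\<exists>m a. a \<in> A \<and> x = sh m a)"
  unfolding plusZ_def by blast

lemma subset_plusZ: "A \<subseteq> pZ A"
  by (metis plusZ_iff shift_0 subsetI)

lemma shift_in_plusZ:
  assumes "A \<subseteq> topspace T" "x \<in> pZ A" shows "sh m x \<in> pZ A"
  using assms shift_add by (fastforce simp: plusZ_iff)

lemma plusZ_subset_topspace: "A \<subseteq> topspace T \<Longrightarrow> pZ A \<subseteq> topspace T"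
  unfolding plusZ_def using shift_in_topspace by blast

end

locale degree_one_map = deck_translation +
  fixes F :: "'a \<Rightarrow> 'a"
  assumes continuous_F: "continuous_map T T F"
    and degree_one: "degree_one T \<tau> F"
begin

lemma F_in_topspace: "x \<in> topspace T \<Longrightarrow> F x \<in> topspace T"
  using continuous_map_image_subset_topspace[OF continuous_F] by blast

lemma funpow_F_in_topspace: "x \<in> topspace T \<Longrightarrow> (F ^^ n) x \<in> topspace T"
  by (induction n) (auto simp: F_in_topspace)

lemma F_translation: "x \<in> topspace T \<Longrightarrow> F (\<tau> x) = \<tau> (F x)"
  using degree_one unfolding degree_one_def by blast

lemma F_inverse_translation:
  assumes "x \<in> topspace T" shows "F (\<sigma> x) = \<sigma> (F x)"
  by (metis F_in_topspace F_translation assms inverse_translation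
      inverse_translation_in_topspace translation_inverse)

lemma F_shift:
  assumes "x \<in> topspace T" shows "F (sh m x) = sh m (F x)"
proof (induction m rule: int_induct[where k = 0])
  case (step1 i)
  then show ?case
    by (simp add: shift_succ assms F_in_topspace shift_in_topspace F_translation)
next
  case (step2 i)
  then show ?case
    by (simp add: shift_pred assms F_in_topspace shift_in_topspace F_inverse_translation)
qed simp

lemma funpow_F_shift: "x \<in> topspace T \<Longrightarrow> (F ^^ n) (sh m x) = sh m ((F ^^ n) x)"
  by (induction n) (auto simp: F_shift funpow_F_in_topspace)

end

section \<open>The retraction to the real line and the fundamental domain\<close>

locale lifted_degree_one_map = degree_one_map +
  fixes h :: "real \<Rightarrow> 'a"
  assumes lifted_graph: "lifted_graph T h \<tau>"
begin

abbreviation "TRF \<equiv> TR T h F"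
abbreviation "ITR \<equiv> T interior_of TR T h F"
abbreviation "X \<equiv> XX T h F"

lemma homeomorphic_h: "homeomorphic_map euclideanreal (subtopology T (range h)) h"
  using lifted_graph unfolding lifted_graph_def by blast

lemma h_in_topspace: "h t \<in> topspace T"
  using homeomorphic_imp_surjective_map[OF homeomorphic_h] by auto

lemma inj_h: "inj h"
  using homeomorphic_imp_injective_map[OF homeomorphic_h] by simp

lemma shift_h: "sh m (h t) = h (t + of_int m)"
proof (induction m rule: int_induct[where k = 0])
  case (step1 i)
  have "\<tau> (h s) = h (s + 1)" for s
    using lifted_graph unfolding lifted_graph_def by blast
  with step1 show ?case
    by (simp add: shift_succ h_in_topspace add.assoc)
next
  case (step2 i)
  have "\<tau> (h (s - 1)) = h s" for s
    using lifted_graph unfolding lifted_graph_def by (metis diff_add_cancel)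
  then have "\<sigma> (h s) = h (s - 1)" for s
    by (metis h_in_topspace inverse_translation)
  with step2 show ?case
    by (simp add: shift_pred h_in_topspace algebra_simps)
qed simp

lemma shift_in_range_h_iff:
  assumes "x \<in> topspace T" shows "sh m x \<in> range h \<longleftrightarrow> x \<in> range h"
proof
  assume "sh m x \<in> range h"
  then obtain t where "sh m x = h t" by blast
  then show "x \<in> range h"
    using shift_neg_cancel[of x m] shift_h[of "- m" t] assms by (metis rangeI)
qed (auto simp: shift_h)

definition complement_component :: "'a \<Rightarrow> 'a set" where
  "complement_component y = connected_component_of_set (subtopology T (topspace T - range h)) y"

lemma rR_h [simp]: "rR T h (h t) = t"
  by (simp add: rR_def inv_f_f[OF inj_h])

lemma rR_component_unique:
  assumes "y \<in> topspace T" "y \<notin> range h"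
  shows "\<exists>!t. h t \<in> T closure_of complement_component y"
proof -
  have "complement_component y \<in> connected_components_of (subtopology T (topspace T - range h))"
    using assms unfolding connected_components_of_def complement_component_def by auto
  then have "\<exists>!z. z \<in> T closure_of complement_component y \<inter> range h"
    using lifted_graph unfolding lifted_graph_def by blast
  then obtain z where z: "z \<in> T closure_of complement_component y \<inter> range h"
    and unique: "\<And>w. w \<in> T closure_of complement_component y \<inter> range h \<Longrightarrow> w = z"
    by blast
  then obtain t where "z = h t" by blast
  with z have t: "h t \<in> T closure_of complement_component y" by simp
  show ?thesis
  proof (rule ex1I[of _ t])
    fix s assume "h s \<in> T closure_of complement_component y"
    then have "h s = h t" using unique[of "h s"] \<open>z = h t\<close> by simp
    then show "s = t" using inj_h by (simp add: inj_eq)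
  qed (fact t)
qed

lemma rR_component:
  assumes "y \<in> topspace T" "y \<notin> range h"
  shows "h (rR T h y) \<in> T closure_of complement_component y"
    and "h t \<in> T closure_of complement_component y \<Longrightarrow> rR T h y = t"
proof -
  have rR_eq: "rR T h y = (THE t. h t \<in> T closure_of complement_component y)"
    using assms(2) unfolding rR_def complement_component_def by (rule if_not_P)
  show "h (rR T h y) \<in> T closure_of complement_component y"
    unfolding rR_eq by (rule theI'[OF rR_component_unique[OF assms]])
  show "h t \<in> T closure_of complement_component y \<Longrightarrow> rR T h y = t"
    unfolding rR_eq by (rule the1_equality[OF rR_component_unique[OF assms]])
qed

lemma homeomorphic_shift_complement:
  "homeomorphic_map (subtopology T (topspace T - range h)) (subtopology T (topspace T - range h)) (sh m)"
  by (rule homeomorphic_map_subtopologies_alt[OF homeomorphic_map_shift])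
    (simp add: shift_in_range_h_iff)

lemma rR_shift:
  assumes x: "x \<in> topspace T" shows "rR T h (sh m x) = rR T h x + of_int m"
proof (cases "x \<in> range h")
  case True
  then show ?thesis by (auto simp: shift_h)
next
  case False
  have component_shift: "complement_component (sh m x) = sh m ` complement_component x"
    unfolding complement_component_def
    by (rule homeomorphic_map_connected_component_of[OF homeomorphic_shift_complement])
      (use x False in simp)
  have "complement_component x \<subseteq> topspace T"
    using connected_component_of_subset_topspace unfolding complement_component_def by fastforce
  then have "T closure_of complement_component (sh m x) = sh m ` (T closure_of complement_component x)"
    unfolding component_shift by (rule homeomorphic_map_closure_of[OF homeomorphic_map_shift])
  moreover have "h (rR T h x) \<in> T closure_of complement_component x"
    by (rule rR_component(1)[OF x False])
  ultimately have "h (rR T h x + of_int m) \<in> T closure_of complement_component (sh m x)"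
    by (metis image_eqI shift_h)
  moreover have "sh m x \<notin> range h"
    using False shift_in_range_h_iff[OF x] by simp
  ultimately show ?thesis
    using rR_component(2)[OF shift_in_topspace[OF x]] by simp
qed

lemma connected_subset_complement_component:
  assumes "connectedin T K" "K \<subseteq> topspace T - range h" "y \<in> K"
  shows "K \<subseteq> complement_component y"
  unfolding complement_component_def
  using assms by (intro connected_component_of_maximal) (auto simp: connectedin_subtopology)

lemma rR_eq_on_connected:
  assumes "connectedin T K" "K \<subseteq> topspace T - range h" "x \<in> K" "y \<in> K"
  shows "rR T h x = rR T h y"
proof -
  have "connected_component_of (subtopology T (topspace T - range h)) y x"
    using connected_subset_complement_component[OF assms(1,2,4)] assms(3)
    unfolding complement_component_def by blast
  then have "complement_component x = complement_component y"
    unfolding complement_component_def by (simp add: connected_component_of_equiv)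
  moreover have x: "x \<in> topspace T" "x \<notin> range h" and y: "y \<in> topspace T" "y \<notin> range h"
    using assms(2-4) by auto
  ultimately show ?thesis
    using rR_component(1)[OF y] rR_component(2)[OF x] by simp
qed

lemma rR_on_connected_closure:
  assumes "connectedin T K" "K \<subseteq> topspace T - range h" "y \<in> K" "h t \<in> T closure_of K"
  shows "rR T h y = t"
proof -
  have "T closure_of K \<subseteq> T closure_of complement_component y"
    by (rule closure_of_mono[OF connected_subset_complement_component[OF assms(1-3)]])
  moreover have "y \<in> topspace T" "y \<notin> range h"
    using assms(2,3) by auto
  ultimately show ?thesis
    using rR_component(2) assms(4) by blast
qed

lemma range_h_subset_TR: "range h \<subseteq> TRF"
proof -
  have "range h \<subseteq> (\<Union>n. (F ^^ n) ` range h)"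
    by (metis (no_types, lifting) UN_upper UNIV_I funpow_0 image_cong image_ident)
  also have "\<dots> \<subseteq> TRF"
    unfolding TR_def by (rule closure_of_subset) (use funpow_F_in_topspace h_in_topspace in blast)
  finally show ?thesis .
qed

lemma shift_TR: "x \<in> TRF \<Longrightarrow> sh m x \<in> TRF"
proof -
  let ?S = "\<Union>n. (F ^^ n) ` range h"
  have "sh m ` ?S \<subseteq> ?S"
  proof (rule image_subsetI)
    fix y assume "y \<in> ?S"
    then obtain n t where "y = (F ^^ n) (h t)" by blast
    then have "sh m y = (F ^^ n) (h (t + of_int m))"
      by (metis funpow_F_shift h_in_topspace shift_h)
    then show "sh m y \<in> ?S" by blast
  qed
  have "sh m ` (T closure_of ?S) \<subseteq> T closure_of (sh m ` ?S)"
    by (rule continuous_map_image_closure_subset[OF continuous_map_shift])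
  also have "\<dots> \<subseteq> T closure_of ?S"
    by (rule closure_of_mono) fact
  finally show "x \<in> TRF \<Longrightarrow> sh m x \<in> TRF"
    unfolding TR_def by blast
qed

lemma shift_interior_TR:
  assumes "x \<in> ITR" shows "sh m x \<in> ITR"
proof -
  have "TRF \<subseteq> topspace T"
    by (simp add: TR_def closure_of_subset_topspace)
  then have "sh m ` ITR = T interior_of (sh m ` TRF)"
    by (rule homeomorphic_map_interior_of[OF homeomorphic_map_shift, symmetric])
  also have "\<dots> \<subseteq> ITR"
    using shift_TR by (intro interior_of_mono) blast
  finally show ?thesis using assms by blast
qed

lemma TR_closed: "closedin T TRF"
  by (simp add: TR_def)

lemma XX_subset_topspace: "X \<subseteq> topspace T"
  unfolding XX_def by blast

lemma XX_disjoint_interior_TR: "X \<inter> ITR = {}"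
  unfolding XX_def using closure_of_complement[of T TRF] by blast

lemma XX_shift_eq_0:
  assumes "x \<in> X" "sh m x \<in> X" shows "m = 0"
proof -
  have "rR T h x \<in> {0..<1}" "rR T h x + of_int m \<in> {0..<1}"
    using assms rR_shift[of x m] XX_subset_topspace unfolding XX_def by auto
  then have "of_int m < (1::real)" "- 1 < (of_int m :: real)"
    by auto
  then show ?thesis by linarith
qed

lemma plusZ_Int_XX:
  assumes "A \<subseteq> X" shows "pZ A \<inter> X = A"
proof
  show "pZ A \<inter> X \<subseteq> A"
  proof
    fix x assume "x \<in> pZ A \<inter> X"
    then obtain m a where "a \<in> A" "x = sh m a" "sh m a \<in> X"
      by (auto simp: plusZ_iff)
    then show "x \<in> A"
      using XX_shift_eq_0[of a m] assms by auto
  qed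
qed (use assms subset_plusZ in blast)

end

section \<open>Branches and the basic partition\<close>

locale sun_like_partition = lifted_degree_one_map +
  fixes \<Lambda> :: "'i set" and \<gamma> :: "'i \<Rightarrow> real \<Rightarrow> 'a"
    and P :: "'a set set" and l :: "'a set \<Rightarrow> 'i" and p :: "'a set \<Rightarrow> int"
  assumes sun_like: "sun_like T h F \<Lambda> \<gamma>"
    and basic_partition: "basic_partition T h \<tau> F \<Lambda> \<gamma> P l p"
begin

abbreviation branch :: "'i \<Rightarrow> 'a set" where "branch i \<equiv> \<gamma> i ` {0..1}"
abbreviation "I01 \<equiv> subtopology euclideanreal {0..(1::real)}"

lemma sun_like_branches:
  obtains I where "(topspace T - TRF) \<inter> {x \<in> topspace T. rR T h x \<in> {0..<1}} = (\<Union>i\<in>\<Lambda>. I i)"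
    "\<And>i. i \<in> \<Lambda> \<Longrightarrow> T closure_of (I i) = branch i"
    "\<And>i. i \<in> \<Lambda> \<Longrightarrow> homeomorphic_map I01 (subtopology T (branch i)) (\<gamma> i)"
    "\<And>i. i \<in> \<Lambda> \<Longrightarrow> branch i \<inter> TRF = {\<gamma> i 0}"
    "\<And>i j. i \<in> \<Lambda> \<Longrightarrow> j \<in> \<Lambda> \<Longrightarrow> i \<noteq> j \<Longrightarrow> branch i \<inter> branch j = {}"
proof -
  from sun_like obtain I where
    "(topspace T - TRF) \<inter> {x \<in> topspace T. rR T h x \<in> {0..<1}} = (\<Union>i\<in>\<Lambda>. I i)"
    "\<forall>i\<in>\<Lambda>. (\<exists>J::real set. is_interval J \<and>
        subtopology T (I i) homeomorphic_space subtopology euclideanreal J) \<and>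
        T closure_of (I i) = branch i"
    "\<forall>i\<in>\<Lambda>. homeomorphic_map I01 (subtopology T (branch i)) (\<gamma> i) \<and>
        branch i \<inter> TRF = {\<gamma> i 0}"
    "\<forall>i\<in>\<Lambda>. \<forall>j\<in>\<Lambda>. i \<noteq> j \<longrightarrow> branch i \<inter> branch j = {}"
    unfolding sun_like_def by (elim conjE exE)
  then show ?thesis
    by (intro that[of I]) simp_all
qed

lemma homeomorphic_branch: "i \<in> \<Lambda> \<Longrightarrow> homeomorphic_map I01 (subtopology T (branch i)) (\<gamma> i)"
  by (metis sun_like_branches)

lemma branch_Int_TR: "i \<in> \<Lambda> \<Longrightarrow> branch i \<inter> TRF = {\<gamma> i 0}"
  by (metis sun_like_branches)

lemma branches_disjoint: "i \<in> \<Lambda> \<Longrightarrow> j \<in> \<Lambda> \<Longrightarrow> i \<noteq> j \<Longrightarrow> branch i \<inter> branch j = {}"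
  by (metis sun_like_branches)

lemma branch_closure_of_complement_part:
  assumes "i \<in> \<Lambda>"
  obtains I where "I \<subseteq> topspace T - TRF" "\<And>y. y \<in> I \<Longrightarrow> rR T h y \<in> {0..<1}"
    "T closure_of I = branch i"
proof -
  obtain I where "(topspace T - TRF) \<inter> {x \<in> topspace T. rR T h x \<in> {0..<1}} = (\<Union>i\<in>\<Lambda>. I i)"
    "T closure_of (I i) = branch i"
    using sun_like_branches assms by metis
  then show ?thesis
    using that[of "I i"] assms by blast
qed

lemma inj_on_branch: "i \<in> \<Lambda> \<Longrightarrow> inj_on (\<gamma> i) {0..1}"
  using homeomorphic_imp_injective_map[OF homeomorphic_branch] by simp

lemma continuous_map_branch: "i \<in> \<Lambda> \<Longrightarrow> continuous_map I01 T (\<gamma> i)"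
  using homeomorphic_imp_continuous_map[OF homeomorphic_branch] continuous_map_in_subtopology
  by blast

lemma branch_subset_topspace: "i \<in> \<Lambda> \<Longrightarrow> branch i \<subseteq> topspace T"
  using continuous_map_image_subset_topspace[OF continuous_map_branch] by simp

lemma closedin_branch: "i \<in> \<Lambda> \<Longrightarrow> closedin T (branch i)"
  by (metis branch_closure_of_complement_part closedin_closure_of)

lemma closedin_branch_segment:
  assumes "i \<in> \<Lambda>" "0 \<le> a" "b \<le> 1" shows "closedin T (\<gamma> i ` {a..b})"
proof -
  have "{a..b} = {a..b} \<inter> {0..1}"
    using assms by auto
  then have "closedin I01 {a..b}"
    unfolding closedin_subtopology by (metis closed_atLeastAtMost closed_closedin)
  then have "closedin (subtopology T (branch i)) (\<gamma> i ` {a..b})"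
    using homeomorphic_map_closedness[OF homeomorphic_branch[OF assms(1)], of "{a..b}"] assms
    by auto
  then show ?thesis
    using closedin_trans_full closedin_branch[OF assms(1)] by blast
qed

lemma branch_0_in_TR: "i \<in> \<Lambda> \<Longrightarrow> \<gamma> i 0 \<in> TRF"
  using branch_Int_TR by blast

lemma branch_notin_TR:
  assumes "i \<in> \<Lambda>" "0 < t" "t \<le> 1" shows "\<gamma> i t \<notin> TRF"
proof
  assume "\<gamma> i t \<in> TRF"
  then have "\<gamma> i t = \<gamma> i 0"
    using branch_Int_TR[OF assms(1)] assms by auto
  then have "t = 0"
    by (rule inj_onD[OF inj_on_branch[OF assms(1)]]) (use assms in auto)
  with assms show False by simp
qed

lemma open_branch_off_line:
  assumes i: "i \<in> \<Lambda>"
  shows "connectedin T (\<gamma> i ` {0<..1})" "\<gamma> i ` {0<..1} \<subseteq> topspace T - range h"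
    and "\<gamma> i 0 \<in> T closure_of (\<gamma> i ` {0<..1})"
proof -
  show "connectedin T (\<gamma> i ` {0<..1})"
    by (rule connectedin_continuous_map_image[OF continuous_map_branch[OF i]])
      (auto simp: connectedin_subtopology)
  show "\<gamma> i ` {0<..1} \<subseteq> topspace T - range h"
  proof (rule image_subsetI)
    fix t :: real assume "t \<in> {0<..1}"
    then have "\<gamma> i t \<notin> TRF" "\<gamma> i t \<in> topspace T"
      using branch_notin_TR[OF i] branch_subset_topspace[OF i] by auto
    then show "\<gamma> i t \<in> topspace T - range h"
      using range_h_subset_TR by blast
  qed
  have "{0..1} \<inter> {0<..(1::real)} = {0<..1}" by auto
  then have "0 \<in> I01 closure_of {0<..1}"
    by (simp only: closure_of_subtopology) simp
  then have "\<gamma> i 0 \<in> \<gamma> i ` (I01 closure_of {0<..1})"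
    by (rule imageI)
  also have "\<dots> \<subseteq> T closure_of (\<gamma> i ` {0<..1})"
    by (rule continuous_map_image_closure_subset[OF continuous_map_branch[OF i]])
  finally show "\<gamma> i 0 \<in> T closure_of (\<gamma> i ` {0<..1})" .
qed

lemma rR_constant_on_branch:
  assumes i: "i \<in> \<Lambda>" and x: "x \<in> branch i" and s: "0 < s" "s \<le> 1"
  shows "rR T h x = rR T h (\<gamma> i s)"
proof -
  let ?K = "\<gamma> i ` {0<..1}"
  have s_K: "\<gamma> i s \<in> ?K" using s by auto
  note K = open_branch_off_line[OF i]
  show ?thesis
  proof (cases "\<gamma> i 0 \<in> range h")
    case True
    then obtain t0 where t0: "\<gamma> i 0 = h t0" by (metis rangeE)
    show ?thesis
    proof (cases "x \<in> ?K")
      case True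
      then show ?thesis
        by (rule rR_eq_on_connected[OF K(1,2) _ s_K])
    next
      case False
      obtain t where "t \<in> {0..1}" "x = \<gamma> i t" using x by blast
      with False have "x = h t0"
        using t0 by (cases "t = 0") auto
      moreover have "rR T h (\<gamma> i s) = t0"
        using rR_on_connected_closure[OF K(1,2) s_K] K(3) t0 by simp
      ultimately show ?thesis by simp
    qed
  next
    case False
    have "connectedin T (branch i)"
      by (rule connectedin_continuous_map_image[OF continuous_map_branch[OF i]])
        (simp add: connectedin_subtopology)
    moreover have "branch i \<subseteq> topspace T - range h"
    proof (rule image_subsetI)
      fix t :: real assume "t \<in> {0..1}"
      then show "\<gamma> i t \<in> topspace T - range h"
        using K(2)[unfolded image_subset_iff] False branch_subset_topspace[OF i]
        by (cases "t = 0") auto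
    qed
    moreover have "\<gamma> i s \<in> branch i"
      using s by auto
    ultimately show ?thesis
      by (rule rR_eq_on_connected[OF _ _ x])
  qed
qed

lemma branch_subset_XX:
  assumes i: "i \<in> \<Lambda>" shows "branch i \<subseteq> X"
proof
  fix x assume x: "x \<in> branch i"
  obtain I where I: "I \<subseteq> topspace T - TRF" "\<And>y. y \<in> I \<Longrightarrow> rR T h y \<in> {0..<1}"
    "T closure_of I = branch i"
    using branch_closure_of_complement_part[OF i] by blast
  have "\<gamma> i 0 \<in> branch i" by simp
  then have "I \<noteq> {}" using I(3) by auto
  then obtain y where y: "y \<in> I" by blast
  have "y \<in> branch i"
    using closure_of_subset[of I T] I(1,3) y by blast
  then obtain s where "s \<in> {0..1}" "y = \<gamma> i s" by blast
  moreover have "y \<noteq> \<gamma> i 0"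
    using I(1) y branch_0_in_TR[OF i] by blast
  ultimately have "0 < s" "s \<le> 1" "y = \<gamma> i s"
    by (auto simp: less_eq_real_def)
  then have "rR T h x \<in> {0..<1}"
    using rR_constant_on_branch[OF i x] I(2)[OF y] by simp
  moreover have "branch i \<subseteq> T closure_of (topspace T - TRF)"
    using closure_of_mono[OF I(1)] I(3) by blast
  ultimately show "x \<in> X"
    unfolding XX_def using x branch_subset_topspace[OF i] by auto
qed

lemma partition_element:
  assumes "A \<in> P"
  shows "l A \<in> \<Lambda>"
    and "\<exists>i\<in>\<Lambda>. \<exists>a b. 0 \<le> a \<and> a \<le> b \<and> b \<le> 1 \<and> A = \<gamma> i ` {a..b} \<and>
           F (\<gamma> i a) = sh (p A) (\<gamma> (l A) 0)"
    and "F ` A \<subseteq> sh (p A) ` branch (l A) \<union> ITR"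
proof -
  have "\<forall>A\<in>P. A \<noteq> {} \<and> l A \<in> \<Lambda> \<and>
          (\<exists>i\<in>\<Lambda>. \<exists>a b. 0 \<le> a \<and> a \<le> b \<and> b \<le> 1 \<and> A = \<gamma> i ` {a..b} \<and>
             F (\<gamma> i a) = sh (p A) (\<gamma> (l A) 0)) \<and>
          F ` A \<subseteq> sh (p A) ` branch (l A) \<union> ITR"
    using basic_partition unfolding basic_partition_def by (elim conjE)
  with assms show "l A \<in> \<Lambda>"
    and "\<exists>i\<in>\<Lambda>. \<exists>a b. 0 \<le> a \<and> a \<le> b \<and> b \<le> 1 \<and> A = \<gamma> i ` {a..b} \<and>
           F (\<gamma> i a) = sh (p A) (\<gamma> (l A) 0)"
    and "F ` A \<subseteq> sh (p A) ` branch (l A) \<union> ITR"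
    by simp_all
qed

lemma partition_segment:
  assumes "A \<in> P"
  obtains i a b where "i \<in> \<Lambda>" "0 \<le> a" "a \<le> b" "b \<le> 1" "A = \<gamma> i ` {a..b}"
    "F (\<gamma> i a) = sh (p A) (\<gamma> (l A) 0)"
  using partition_element(2)[OF assms] by blast

lemma partition_disjoint: "A \<in> P \<Longrightarrow> B \<in> P \<Longrightarrow> A \<noteq> B \<Longrightarrow> A \<inter> B = {}"
  using basic_partition unfolding basic_partition_def by blast

lemma partition_subset_branch:
  assumes "A \<in> P" obtains i where "i \<in> \<Lambda>" "A \<subseteq> branch i"
proof -
  obtain i a b where "i \<in> \<Lambda>" "0 \<le> a" "b \<le> 1" "A = \<gamma> i ` {a..b}"
    using partition_segment[OF assms] by metis
  moreover have "{a..b} \<subseteq> {0..1}"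
    using \<open>0 \<le> a\<close> \<open>b \<le> 1\<close> by auto
  ultimately show ?thesis
    using that[of i] by (metis image_mono)
qed

lemma partition_subset_XX: "A \<in> P \<Longrightarrow> A \<subseteq> X"
  by (metis partition_subset_branch branch_subset_XX order_trans)

lemma partition_subset_topspace: "A \<in> P \<Longrightarrow> A \<subseteq> topspace T"
  using partition_subset_XX XX_subset_topspace by blast

section \<open>Cylinders\<close>

abbreviation "cy \<equiv> cyl T h \<tau> F"

definition word :: "'a set list \<Rightarrow> bool" where
  "word w \<longleftrightarrow> w \<noteq> [] \<and> set w \<subseteq> P"

definition orbit_cyl :: "'a set list \<Rightarrow> 'a set" where
  "orbit_cyl w = (F ^^ (length w - 1)) `
     {x \<in> topspace T. \<forall>i<length w. (F ^^ i) x \<in> pZ (w ! i)}"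

definition cyl_step :: "'a set \<Rightarrow> 'a set \<Rightarrow> 'a set" where
  "cyl_step c A = F ` pZ c \<inter> pZ A \<inter> X"

lemma cyl_eq_orbit_cyl: "cy w = orbit_cyl w \<inter> X"
  unfolding cyl_def orbit_cyl_def ..

lemma shift_in_orbit_cyl:
  assumes "set w \<subseteq> P" "y \<in> orbit_cyl w" shows "sh m y \<in> orbit_cyl w"
proof -
  obtain x where x: "x \<in> topspace T" "\<forall>i<length w. (F ^^ i) x \<in> pZ (w ! i)"
    and y: "y = (F ^^ (length w - 1)) x"
    using assms(2) unfolding orbit_cyl_def by blast
  have "(F ^^ i) (sh m x) \<in> pZ (w ! i)" if "i < length w" for i
  proof -
    have "w ! i \<subseteq> topspace T"
      using assms(1) that partition_subset_topspace nth_mem by blast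
    then show ?thesis
      using shift_in_plusZ x that by (simp add: funpow_F_shift)
  qed
  moreover have "sh m y = (F ^^ (length w - 1)) (sh m x)"
    using x y by (simp add: funpow_F_shift)
  ultimately show ?thesis
    unfolding orbit_cyl_def using shift_in_topspace[OF x(1)] by blast
qed

lemma orbit_cyl_subset_last: "w \<noteq> [] \<Longrightarrow> orbit_cyl w \<subseteq> pZ (last w)"
  unfolding orbit_cyl_def by (auto simp: last_conv_nth)

lemma orbit_cyl_eq_plusZ_cyl:
  assumes w: "word w" shows "orbit_cyl w = pZ (cy w)"
proof
  have last: "last w \<in> P" and letters: "set w \<subseteq> P"
    using w unfolding word_def by auto
  show "orbit_cyl w \<subseteq> pZ (cy w)"
  proof
    fix y assume y: "y \<in> orbit_cyl w"
    then have "y \<in> pZ (last w)"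
      using orbit_cyl_subset_last w unfolding word_def by blast
    then obtain m a where a: "a \<in> last w" "y = sh m a"
      unfolding plusZ_iff by blast
    have "a \<in> topspace T" "a \<in> X"
      using a(1) partition_subset_topspace[OF last] partition_subset_XX[OF last] by blast+
    then have "sh (- m) y = a" "a \<in> X"
      using a(2) by simp_all
    then have "a \<in> cy w"
      unfolding cyl_eq_orbit_cyl using shift_in_orbit_cyl[OF letters y, of "- m"] by simp
    with a show "y \<in> pZ (cy w)"
      unfolding plusZ_iff by blast
  qed
  show "pZ (cy w) \<subseteq> orbit_cyl w"
  proof
    fix y assume "y \<in> pZ (cy w)"
    then obtain m a where "a \<in> orbit_cyl w" "y = sh m a"
      unfolding plusZ_iff cyl_eq_orbit_cyl by blast
    then show "y \<in> orbit_cyl w"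
      using shift_in_orbit_cyl[OF letters] by simp
  qed
qed

lemma orbit_cyl_snoc:
  assumes "w \<noteq> []" shows "orbit_cyl (w @ [A]) = F ` orbit_cyl w \<inter> pZ A"
proof -
  let ?S = "\<lambda>w. {x \<in> topspace T. \<forall>i<length w. (F ^^ i) x \<in> pZ (w ! i)}"
  have F_pow: "(F ^^ length w) x = F ((F ^^ (length w - 1)) x)" for x
    using assms by (cases w) simp_all
  have "?S (w @ [A]) = {x \<in> ?S w. (F ^^ length w) x \<in> pZ A}"
    unfolding nth_append length_append_singleton less_Suc_eq by auto
  then have "orbit_cyl (w @ [A]) = (F ^^ length w) ` {x \<in> ?S w. (F ^^ length w) x \<in> pZ A}"
    unfolding orbit_cyl_def by simp
  also have "\<dots> = F ` orbit_cyl w \<inter> pZ A"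
    unfolding orbit_cyl_def F_pow by blast
  finally show ?thesis .
qed

lemma cyl_snoc:
  assumes "word w" shows "cy (w @ [A]) = cyl_step (cy w) A"
proof -
  have "cy (w @ [A]) = F ` orbit_cyl w \<inter> pZ A \<inter> X"
    using assms by (simp add: cyl_eq_orbit_cyl orbit_cyl_snoc word_def)
  then show ?thesis
    unfolding cyl_step_def orbit_cyl_eq_plusZ_cyl[OF assms] .
qed

lemma cyl_singleton:
  assumes "A \<in> P" shows "cy [A] = A"
proof -
  have "orbit_cyl [A] = pZ A"
    unfolding orbit_cyl_def using plusZ_subset_topspace[OF partition_subset_topspace[OF assms]]
    by force
  then show ?thesis
    by (simp add: cyl_eq_orbit_cyl plusZ_Int_XX partition_subset_XX assms)
qed

end

definition down_closed :: "real set \<Rightarrow> bool" where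
  "down_closed E \<longleftrightarrow> E \<subseteq> {0..1} \<and> (\<forall>s t. t \<in> E \<longrightarrow> 0 \<le> s \<longrightarrow> s \<le> t \<longrightarrow> s \<in> E)"

lemma down_closedD: "down_closed E \<Longrightarrow> t \<in> E \<Longrightarrow> 0 \<le> s \<Longrightarrow> s \<le> t \<Longrightarrow> s \<in> E"
  unfolding down_closed_def by blast

lemma down_closed_subset: "down_closed E \<Longrightarrow> E \<subseteq> {0..1}"
  unfolding down_closed_def by blast

lemma down_closed_is_interval:
  assumes "down_closed E" shows "is_interval E"
  unfolding is_interval_1
proof (intro ballI allI impI)
  fix a b x assume "a \<in> E" "b \<in> E" "a \<le> x \<and> x \<le> b"
  moreover have "0 \<le> a"
    using \<open>a \<in> E\<close> down_closed_subset[OF assms] by auto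
  ultimately show "x \<in> E"
    using down_closedD[OF assms \<open>b \<in> E\<close>] by simp
qed

lemma down_closed_empty: "down_closed {}"
  unfolding down_closed_def by simp

context sun_like_partition
begin

lemma branch_segments_Int:
  assumes i: "i \<in> \<Lambda>" and s: "0 \<le> s" "s \<le> 1"
  shows "\<gamma> i ` {s..1} \<inter> (\<gamma> i ` {0..s} \<union> TRF) = {\<gamma> i s}"
proof
  show "\<gamma> i ` {s..1} \<inter> (\<gamma> i ` {0..s} \<union> TRF) \<subseteq> {\<gamma> i s}"
  proof
    fix z assume z: "z \<in> \<gamma> i ` {s..1} \<inter> (\<gamma> i ` {0..s} \<union> TRF)"
    then obtain r where r: "r \<in> {s..1}" "z = \<gamma> i r" by blast
    show "z \<in> {\<gamma> i s}"
    proof (cases "r = s")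
      case False
      with r s have "0 < r" "r \<le> 1" by auto
      then have "\<gamma> i r \<notin> TRF"
        by (rule branch_notin_TR[OF i])
      moreover have "\<gamma> i r \<in> \<gamma> i ` {0..s} \<union> TRF"
        using z r by simp
      ultimately obtain r' where r': "r' \<in> {0..s}" "\<gamma> i r = \<gamma> i r'" by blast
      have "r = r'"
        by (rule inj_onD[OF inj_on_branch[OF i] r'(2)]) (use r r' s in auto)
      with r r' False show ?thesis by auto
    qed (use r in simp)
  qed
qed (use s in auto)

text \<open>A connected set through the base point of a branch, contained in that branch and
  \<open>T\<^sub>\<real>\<close>, cannot jump over a point \<open>\<gamma> l s\<close> of the branch: the closed sets on either side
  of that point would disconnect it.\<close>

lemma down_closed_trace:
  assumes l: "l0 \<in> \<Lambda>" and Z: "connectedin T Z" "Z \<subseteq> branch l0 \<union> TRF" "\<gamma> l0 0 \<in> Z"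
  shows "down_closed {t \<in> {0..1}. \<gamma> l0 t \<in> Z}"
  unfolding down_closed_def
proof (intro conjI allI impI)
  fix s t assume t: "t \<in> {t \<in> {0..1}. \<gamma> l0 t \<in> Z}" and s: "0 \<le> s" "s \<le> t"
  show "s \<in> {t \<in> {0..1}. \<gamma> l0 t \<in> Z}"
  proof (rule ccontr)
    assume "s \<notin> {t \<in> {0..1}. \<gamma> l0 t \<in> Z}"
    with s t have s_out: "\<gamma> l0 s \<notin> Z" "s \<le> 1" by auto
    let ?U = "\<gamma> l0 ` {s..1}" and ?V = "\<gamma> l0 ` {0..s} \<union> TRF"
    have "closedin T ?U"
      by (rule closedin_branch_segment[OF l s(1)]) simp
    moreover have "closedin T ?V"
      by (intro closedin_Un closedin_branch_segment[OF l] TR_closed) (use s_out in auto)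
    moreover have "Z \<subseteq> ?U \<union> ?V"
    proof -
      have "{0..1} = {0..s} \<union> {s..(1::real)}"
        using s s_out by auto
      then have "branch l0 = \<gamma> l0 ` {0..s} \<union> ?U"
        by (simp only: image_Un)
      with Z(2) have "Z \<subseteq> \<gamma> l0 ` {0..s} \<union> ?U \<union> TRF" by simp
      then show ?thesis by blast
    qed
    moreover have "?U \<inter> ?V \<inter> Z = {}"
      using branch_segments_Int[OF l s(1) s_out(2)] s_out(1) by simp
    moreover have "?U \<inter> Z \<noteq> {}"
    proof -
      have "\<gamma> l0 t \<in> ?U" using t s by auto
      then show ?thesis using t by blast
    qed
    moreover have "?V \<inter> Z \<noteq> {}"
      using Z(3) branch_0_in_TR[OF l] by blast
    ultimately have "closedin T ?U \<and> closedin T ?V \<and> Z \<subseteq> ?U \<union> ?V \<and> ?U \<inter> ?V \<inter> Z = {} \<and>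
        ?U \<inter> Z \<noteq> {} \<and> ?V \<inter> Z \<noteq> {}"
      by (intro conjI)
    then show False
      using Z(1) unfolding connectedin_closedin by blast
  qed
qed auto

lemma partition_image_translate_in_XX:
  assumes B: "B \<in> P" "y \<in> B" and x: "sh m (F y) \<in> X"
  shows "sh m (F y) = sh (- p B) (F y)" "sh (- p B) (F y) \<in> branch (l B)"
proof -
  have lB: "l B \<in> \<Lambda>" by (rule partition_element(1)[OF B(1)])
  have "F y \<notin> ITR"
    using shift_interior_TR[of "F y" m] x XX_disjoint_interior_TR by blast
  then obtain z where z: "z \<in> branch (l B)" "F y = sh (p B) z"
    using partition_element(3)[OF B(1)] B(2) by blast
  have z_top: "z \<in> topspace T"
    using z(1) branch_subset_topspace[OF lB] by blast
  then have "sh (m + p B) z \<in> X"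
    using x z(2) shift_add by simp
  then have "m + p B = 0"
    using XX_shift_eq_0 z(1) branch_subset_XX[OF lB] by blast
  then show "sh m (F y) = sh (- p B) (F y)" "sh (- p B) (F y) \<in> branch (l B)"
    using z z_top by (simp_all add: shift_add)
qed

lemma cyl_step_char:
  assumes B: "B \<in> P" and A: "A \<in> P" and c: "c \<subseteq> B"
  shows "cyl_step c A = A \<inter> branch (l B) \<inter> sh (- p B) ` F ` c"
proof
  show "cyl_step c A \<subseteq> A \<inter> branch (l B) \<inter> sh (- p B) ` F ` c"
  proof
    fix x assume "x \<in> cyl_step c A"
    then obtain y' where "y' \<in> pZ c" "x = F y'" and x: "x \<in> pZ A" "x \<in> X"
      unfolding cyl_step_def by blast
    then obtain m y where y: "y \<in> c" "x = F (sh m y)"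
      unfolding plusZ_iff by blast
    then have x_eq: "x = sh m (F y)"
      using c partition_subset_topspace[OF B] F_shift by auto
    then have "x = sh (- p B) (F y)" "x \<in> branch (l B)"
      using partition_image_translate_in_XX[OF B] y(1) c x(2) by auto
    moreover have "x \<in> A"
      using x plusZ_Int_XX[OF partition_subset_XX[OF A]] by blast
    ultimately show "x \<in> A \<inter> branch (l B) \<inter> sh (- p B) ` F ` c"
      using y(1) by blast
  qed
  show "A \<inter> branch (l B) \<inter> sh (- p B) ` F ` c \<subseteq> cyl_step c A"
  proof
    fix x assume x: "x \<in> A \<inter> branch (l B) \<inter> sh (- p B) ` F ` c"
    then obtain y where y: "y \<in> c" "x = sh (- p B) (F y)" by blast
    then have "x = F (sh (- p B) y)"
      using c partition_subset_topspace[OF B] F_shift by auto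
    moreover have "sh (- p B) y \<in> pZ c"
      using y(1) plusZ_iff by blast
    ultimately show "x \<in> cyl_step c A"
      unfolding cyl_step_def using x subset_plusZ partition_subset_XX[OF A] by blast
  qed
qed

lemma partition_image_shifted:
  assumes B: "B \<in> P" shows "sh (- p B) ` F ` B \<subseteq> branch (l B) \<union> TRF"
proof (rule image_subsetI)
  fix y assume "y \<in> F ` B"
  then have "y \<in> sh (p B) ` branch (l B) \<union> ITR"
    using partition_element(3)[OF B] by blast
  then show "sh (- p B) y \<in> branch (l B) \<union> TRF"
  proof
    assume "y \<in> sh (p B) ` branch (l B)"
    then obtain w where w: "w \<in> branch (l B)" "y = sh (p B) w" by blast
    moreover have "w \<in> topspace T"
      using w(1) branch_subset_topspace[OF partition_element(1)[OF B]] by blast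
    ultimately show ?thesis by simp
  next
    assume "y \<in> ITR"
    then have "sh (- p B) y \<in> ITR"
      by (rule shift_interior_TR)
    then show ?thesis
      using interior_of_subset[of T TRF] by (intro UnI2) blast
  qed
qed

text \<open>This is where the sun-like geometry enters: translated by \<open>-p(B)\<close>, the image of a
  connected piece of \<open>B\<close> containing the point sent to \<open>min X\<^bsup>l(B)\<^esup> + p(B)\<close> is a connected
  set through the base point of the branch \<open>X\<^bsup>l(B)\<^esup>\<close>.\<close>

lemma cyl_step_of_connected:
  assumes B: "B \<in> P" and c: "c \<subseteq> B" "connectedin T c" "sh (p B) (\<gamma> (l B) 0) \<in> F ` c"
  shows "\<exists>E. down_closed E \<and> (\<forall>A\<in>P. cyl_step c A = A \<inter> \<gamma> (l B) ` E)"
proof -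
  have lB: "l B \<in> \<Lambda>" by (rule partition_element(1)[OF B])
  define Z where "Z = sh (- p B) ` F ` c"
  define E where "E = {t \<in> {0..1}. \<gamma> (l B) t \<in> Z}"
  have "connectedin T Z"
    unfolding Z_def using c(2)
    by (intro connectedin_continuous_map_image[OF continuous_map_shift]
        connectedin_continuous_map_image[OF continuous_F])
  moreover have "Z \<subseteq> branch (l B) \<union> TRF"
    unfolding Z_def using partition_image_shifted[OF B] c(1) by blast
  moreover have "\<gamma> (l B) 0 \<in> Z"
  proof -
    have "sh (- p B) (sh (p B) (\<gamma> (l B) 0)) \<in> Z"
      unfolding Z_def using c(3) by (rule imageI)
    moreover have "\<gamma> (l B) 0 \<in> topspace T"
      using branch_subset_topspace[OF lB] by auto
    ultimately show ?thesis by simp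
  qed
  ultimately have "down_closed E"
    unfolding E_def by (rule down_closed_trace[OF lB])
  moreover have "cyl_step c A = A \<inter> \<gamma> (l B) ` E" if "A \<in> P" for A
    unfolding cyl_step_char[OF B that c(1)] Z_def[symmetric] E_def by auto
  ultimately show ?thesis by blast
qed

lemma partition_Int_branch_image:
  assumes A: "A \<in> P" and j: "j \<in> \<Lambda>" and E: "down_closed E" and ne: "A \<inter> \<gamma> j ` E \<noteq> {}"
  obtains a b where "0 \<le> a" "a \<le> b" "b \<le> 1" "A = \<gamma> j ` {a..b}" "a \<in> E"
    "A \<inter> \<gamma> j ` E = \<gamma> j ` ({a..b} \<inter> E)"
    "F (\<gamma> j a) = sh (p A) (\<gamma> (l A) 0)"
proof -
  obtain i a b where seg: "i \<in> \<Lambda>" "0 \<le> a" "a \<le> b" "b \<le> 1" "A = \<gamma> i ` {a..b}"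
    "F (\<gamma> i a) = sh (p A) (\<gamma> (l A) 0)"
    using partition_segment[OF A] by blast
  have E01: "E \<subseteq> {0..1}" by (rule down_closed_subset[OF E])
  have "A \<subseteq> branch i"
    using seg by auto
  moreover have "\<gamma> j ` E \<subseteq> branch j"
    using E01 by auto
  ultimately have "i = j"
    using branches_disjoint[OF seg(1) j] ne by blast
  have Int_eq: "A \<inter> \<gamma> j ` E = \<gamma> j ` ({a..b} \<inter> E)"
    using inj_on_image_Int[OF inj_on_branch[OF j], of "{a..b}" E] seg E01 \<open>i = j\<close> by auto
  then have "{a..b} \<inter> E \<noteq> {}"
    using ne by auto
  then obtain t where "t \<in> {a..b}" "t \<in> E"
    by blast
  then have "a \<in> E"
    using down_closedD[OF E] seg(2) by auto
  with seg Int_eq \<open>i = j\<close> show ?thesis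
    using that by blast
qed

lemma cyl_step_shape:
  assumes B: "B \<in> P" and j: "j \<in> \<Lambda>" and E: "down_closed E"
  shows "\<exists>E'. down_closed E' \<and> (\<forall>A\<in>P. cyl_step (B \<inter> \<gamma> j ` E) A = A \<inter> \<gamma> (l B) ` E')"
proof (cases "B \<inter> \<gamma> j ` E = {}")
  case True
  have "cyl_step {} A = {}" for A
    by (simp add: cyl_step_def plusZ_def)
  with True show ?thesis
    using down_closed_empty by (intro exI[of _ "{}"]) simp
next
  case False
  then obtain a b where seg: "0 \<le> a" "a \<le> b" "b \<le> 1" "a \<in> E"
    "B \<inter> \<gamma> j ` E = \<gamma> j ` ({a..b} \<inter> E)" "F (\<gamma> j a) = sh (p B) (\<gamma> (l B) 0)"
    using partition_Int_branch_image[OF B j E] by metis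
  have "is_interval ({a..b} \<inter> E)"
    by (rule is_interval_Int[OF is_interval_cc down_closed_is_interval[OF E]])
  then have "connectedin I01 ({a..b} \<inter> E)"
    using seg by (auto simp: connectedin_subtopology is_interval_connected_1)
  then have "connectedin T (B \<inter> \<gamma> j ` E)"
    unfolding seg(5) by (rule connectedin_continuous_map_image[OF continuous_map_branch[OF j]])
  moreover have "\<gamma> j a \<in> B \<inter> \<gamma> j ` E"
    unfolding seg(5) using seg by auto
  then have "sh (p B) (\<gamma> (l B) 0) \<in> F ` (B \<inter> \<gamma> j ` E)"
    unfolding seg(6)[symmetric] by (rule imageI)
  ultimately show ?thesis
    by (intro cyl_step_of_connected[OF B]) auto
qed

lemma cyl_shape: "word w \<Longrightarrow> \<exists>j\<in>\<Lambda>. \<exists>E. down_closed E \<and> cy w = last w \<inter> \<gamma> j ` E"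
proof (induction w rule: rev_induct)
  case (snoc A w)
  then have A: "A \<in> P" unfolding word_def by simp
  show ?case
  proof (cases "w = []")
    case True
    obtain i where "i \<in> \<Lambda>" "A \<subseteq> branch i"
      by (rule partition_subset_branch[OF A])
    moreover have "down_closed {0..1}"
      unfolding down_closed_def by auto
    ultimately show ?thesis
      using True cyl_singleton[OF A] by auto
  next
    case False
    then have w: "word w" and B: "last w \<in> P"
      using snoc.prems unfolding word_def by auto
    obtain j E where j: "j \<in> \<Lambda>" and E: "down_closed E" and cy_w: "cy w = last w \<inter> \<gamma> j ` E"
      using snoc.IH[OF w] by blast
    obtain E' where "down_closed E'" "\<forall>A\<in>P. cyl_step (cy w) A = A \<inter> \<gamma> (l (last w)) ` E'"
      using cyl_step_shape[OF B j E] unfolding cy_w by blast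
    then show ?thesis
      using partition_element(1)[OF B] cyl_snoc[OF w] A by auto
  qed
qed (simp add: word_def)

lemma cyl_snoc_shape:
  assumes "word w"
  shows "\<exists>E. down_closed E \<and> (\<forall>A\<in>P. cy (w @ [A]) = A \<inter> \<gamma> (l (last w)) ` E)"
proof -
  have B: "last w \<in> P"
    using assms unfolding word_def by auto
  obtain j E where j: "j \<in> \<Lambda>" and E: "down_closed E" and cy_w: "cy w = last w \<inter> \<gamma> j ` E"
    using cyl_shape[OF assms] by blast
  obtain E' where "down_closed E'" "\<forall>A\<in>P. cyl_step (cy w) A = A \<inter> \<gamma> (l (last w)) ` E'"
    using cyl_step_shape[OF B j E] unfolding cy_w by blast
  then show ?thesis
    using cyl_snoc[OF assms] by auto
qed

lemma partition_proper_cut: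
  assumes A: "A \<in> P" and j: "j \<in> \<Lambda>" and E: "down_closed E"
    and cut: "A \<inter> \<gamma> j ` E \<notin> {{}, A}"
  obtains a b where "0 \<le> a" "a \<le> b" "A = \<gamma> j ` {a..b}" "a \<in> E" "b \<notin> E"
proof -
  have "A \<inter> \<gamma> j ` E \<noteq> {}"
    using cut by simp
  then obtain a b where ab: "0 \<le> a" "a \<le> b" "b \<le> 1" "A = \<gamma> j ` {a..b}" "a \<in> E"
    "A \<inter> \<gamma> j ` E = \<gamma> j ` ({a..b} \<inter> E)"
    by (rule partition_Int_branch_image[OF A j E])
  have "b \<notin> E"
  proof
    assume "b \<in> E"
    then have "{a..b} \<subseteq> E"
      using down_closedD[OF E] ab by auto
    then have "A \<inter> \<gamma> j ` E = A"
      using ab(4,6) by (simp add: Int_absorb2)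
    with cut show False by simp
  qed
  with ab that show ?thesis by blast
qed

text \<open>Two properly cut elements would both contain the points of their segments just below
  the supremum of \<open>E\<close>.\<close>

lemma partition_cut_unique:
  assumes j: "j \<in> \<Lambda>" and E: "down_closed E" and A: "A \<in> P" "A' \<in> P"
    and cut: "A \<inter> \<gamma> j ` E \<notin> {{}, A}" "A' \<inter> \<gamma> j ` E \<notin> {{}, A'}"
  shows "A = A'"
proof -
  obtain a b where ab: "0 \<le> a" "a \<le> b" "A = \<gamma> j ` {a..b}" "a \<in> E" "b \<notin> E"
    by (rule partition_proper_cut[OF A(1) j E cut(1)])
  obtain a' b' where ab': "0 \<le> a'" "a' \<le> b'" "A' = \<gamma> j ` {a'..b'}" "a' \<in> E" "b' \<notin> E"
    by (rule partition_proper_cut[OF A(2) j E cut(2)])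
  have "a' < b"
  proof (rule ccontr)
    assume "\<not> a' < b"
    then have "b \<in> E" using down_closedD[OF E ab'(4), of b] ab by auto
    with ab show False by simp
  qed
  moreover have "a < b'"
  proof (rule ccontr)
    assume "\<not> a < b'"
    then have "b' \<in> E" using down_closedD[OF E ab(4), of b'] ab' by auto
    with ab' show False by simp
  qed
  ultimately have "max a a' \<in> {a..b}" "max a a' \<in> {a'..b'}"
    using ab ab' by auto
  then have "\<gamma> j (max a a') \<in> A \<inter> A'"
    using ab(3) ab'(3) by blast
  then show ?thesis
    using partition_disjoint A by blast
qed

end

section \<open>Significant parts\<close>

lemma drop_eq_iff_nth_from_end:
  assumes "k < length xs" "k < length ys"
  shows "drop (length xs - Suc k) xs = drop (length ys - Suc k) ys \<longleftrightarrow>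
    (\<forall>i\<le>k. xs ! (length xs - 1 - i) = ys ! (length ys - 1 - i))"
proof
  assume eq: "drop (length xs - Suc k) xs = drop (length ys - Suc k) ys"
  show "\<forall>i\<le>k. xs ! (length xs - 1 - i) = ys ! (length ys - 1 - i)"
  proof (intro allI impI)
    fix i assume "i \<le> k"
    then have "drop (length xs - Suc k) xs ! (k - i) = drop (length ys - Suc k) ys ! (k - i)"
      by (simp add: eq)
    with \<open>i \<le> k\<close> assms show "xs ! (length xs - 1 - i) = ys ! (length ys - 1 - i)"
      by (simp add: Suc_diff_Suc)
  qed
next
  assume nth: "\<forall>i\<le>k. xs ! (length xs - 1 - i) = ys ! (length ys - 1 - i)"
  show "drop (length xs - Suc k) xs = drop (length ys - Suc k) ys"
  proof (rule nth_equalityI)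
    fix t assume "t < length (drop (length xs - Suc k) xs)"
    then have "t \<le> k" using assms by simp
    then show "drop (length xs - Suc k) xs ! t = drop (length ys - Suc k) ys ! t"
      using nth[rule_format, of "k - t"] assms by (simp add: Suc_diff_Suc)
  qed (use assms in simp)
qed

context sun_like_partition
begin

text \<open>\<open>full_at w j\<close> means \<open>A\<^sub>0 \<dots> A\<^sub>j \<sim> A\<^sub>j\<close>. We take as significant part the suffix starting at
  the last such \<open>j\<close>; \<open>word_height_eq\<close> reconciles this with \<open>word_height\<close>.\<close>

definition full_at :: "'a set list \<Rightarrow> nat \<Rightarrow> bool" where
  "full_at w j \<longleftrightarrow> cy (take (Suc j) w) = w ! j"

definition last_full :: "'a set list \<Rightarrow> nat" where
  "last_full w = (GREATEST j. j < length w \<and> full_at w j)"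

definition significant_part :: "'a set list \<Rightarrow> 'a set list" where
  "significant_part w = drop (last_full w) w"

lemma word_take: "word w \<Longrightarrow> word (take (Suc j) w)"
  unfolding word_def by (auto dest: in_set_takeD)

lemma word_drop: "word w \<Longrightarrow> j < length w \<Longrightarrow> word (drop j w)"
  unfolding word_def by (auto dest: in_set_dropD)

lemma word_snoc: "word w \<Longrightarrow> A \<in> P \<Longrightarrow> word (w @ [A])"
  unfolding word_def by simp

lemma cyl_append_cong:
  assumes "word u" "word v" "cy u = cy v" "set x \<subseteq> P"
  shows "cy (u @ x) = cy (v @ x)"
  using assms(4)
proof (induction x rule: rev_induct)
  case (snoc A x)
  then have "word (u @ x)" "word (v @ x)"
    using assms(1,2) unfolding word_def by auto
  with snoc show ?case
    using cyl_snoc by (metis append_assoc set_append le_sup_iff)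
qed (simp add: assms(3))

text \<open>The Markov property of cylinders: once \<open>\<langle>A\<^sub>0 \<dots> A\<^sub>j\<rangle> = A\<^sub>j\<close>, the letters before \<open>A\<^sub>j\<close> are
  forgotten.\<close>

lemma cyl_drop_full:
  assumes w: "word w" and j: "j < length w" and full: "full_at w j"
  shows "cy w = cy (drop j w)"
proof -
  have wj: "w ! j \<in> P" and rest: "set (drop (Suc j) w) \<subseteq> P"
    using w j unfolding word_def by (auto dest: in_set_dropD)
  have "cy (take (Suc j) w) = cy [w ! j]"
    using full cyl_singleton[OF wj] unfolding full_at_def by simp
  moreover have "word [w ! j]"
    using wj by (simp add: word_def)
  ultimately have "cy (take (Suc j) w @ drop (Suc j) w) = cy ([w ! j] @ drop (Suc j) w)"
    by (intro cyl_append_cong[OF word_take[OF w] _ _ rest])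
  then show ?thesis
    using j by (simp add: Cons_nth_drop_Suc)
qed

lemma full_at_0: "word w \<Longrightarrow> full_at w 0"
  unfolding full_at_def word_def by (cases w) (auto simp: cyl_singleton)

lemma full_at_drop:
  assumes w: "word w" and j: "j0 \<le> j" "j < length w" and full: "full_at w j0"
  shows "full_at w j \<longleftrightarrow> full_at (drop j0 w) (j - j0)"
proof -
  have "full_at (take (Suc j) w) j0"
    using full j unfolding full_at_def by (simp add: min_def)
  then have "cy (take (Suc j) w) = cy (drop j0 (take (Suc j) w))"
    using cyl_drop_full[OF word_take[OF w]] j by simp
  also have "drop j0 (take (Suc j) w) = take (Suc (j - j0)) (drop j0 w)"
    using j by (simp add: drop_take Suc_diff_le)
  finally show ?thesis
    unfolding full_at_def using j by simp
qed

lemma last_full: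
  assumes "word w"
  shows "last_full w < length w" "full_at w (last_full w)"
    and "j < length w \<Longrightarrow> full_at w j \<Longrightarrow> j \<le> last_full w"
proof -
  have "0 < length w"
    using assms by (simp add: word_def)
  moreover have "full_at w 0"
    by (rule full_at_0[OF assms])
  ultimately have "\<exists>j. j < length w \<and> full_at w j" by blast
  then have "last_full w < length w \<and> full_at w (last_full w)"
    unfolding last_full_def by (rule GreatestI_ex_nat[where b = "length w"]) auto
  then show "last_full w < length w" "full_at w (last_full w)" by auto
  show "j < length w \<Longrightarrow> full_at w j \<Longrightarrow> j \<le> last_full w"
    unfolding last_full_def by (rule Greatest_le_nat[where b = "length w"]) auto
qed

lemma last_full_drop:
  assumes w: "word w" and j0: "j0 < length w" and full: "full_at w j0"
  shows "j0 \<le> last_full w" "last_full (drop j0 w) = last_full w - j0"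
proof -
  show j0_le: "j0 \<le> last_full w"
    by (rule last_full(3)[OF w j0 full])
  have w': "word (drop j0 w)"
    by (rule word_drop[OF w j0])
  have "full_at (drop j0 w) (last_full w - j0)"
    using full_at_drop[OF w j0_le last_full(1)[OF w] full] last_full(2)[OF w] by simp
  moreover have "j \<le> last_full w - j0" if "j < length (drop j0 w)" "full_at (drop j0 w) j" for j
  proof -
    have "j + j0 < length w" using that(1) by simp
    moreover from this have "full_at w (j + j0)"
      using full_at_drop[OF w _ _ full, of "j + j0"] that(2) by simp
    ultimately have "j + j0 \<le> last_full w"
      by (rule last_full(3)[OF w])
    then show ?thesis by simp
  qed
  moreover have "last_full w - j0 < length (drop j0 w)"
    using last_full(1)[OF w] j0_le by simp
  ultimately show "last_full (drop j0 w) = last_full w - j0"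
    using last_full[OF w'] by (intro le_antisym) simp_all
qed

lemma significant_part_drop:
  assumes "word w" "j < length w" "full_at w j"
  shows "significant_part (drop j w) = significant_part w"
  using last_full_drop[OF assms] unfolding significant_part_def by simp

lemma cyl_significant_part:
  assumes "word w" shows "cy (significant_part w) = cy w"
  unfolding significant_part_def using cyl_drop_full[OF assms last_full(1,2)[OF assms]] by simp

lemma csim_iff_common_suffix:
  assumes "word As" "word Bs"
  shows "csim T h \<tau> F As Bs \<longleftrightarrow> (\<exists>i j. i < length As \<and> j < length Bs \<and>
    full_at As i \<and> full_at Bs j \<and> drop i As = drop j Bs)"
proof
  assume "csim T h \<tau> F As Bs"
  then obtain k where k: "k \<le> min (length As - 1) (length Bs - 1)"
    "\<forall>i\<le>k. As ! (length As - 1 - i) = Bs ! (length Bs - 1 - i)"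
    "cy (take (length As - 1 - k + 1) As) = As ! (length As - 1 - k)"
    "Bs ! (length Bs - 1 - k) = cy (take (length Bs - 1 - k + 1) Bs)"
    unfolding csim_def Let_def by blast
  have "length As \<noteq> 0" "length Bs \<noteq> 0"
    using assms unfolding word_def by auto
  moreover have "k \<le> length As - 1" "k \<le> length Bs - 1"
    using k(1) by simp_all
  ultimately have lengths: "k < length As" "k < length Bs"
    by arith+
  show "\<exists>i j. i < length As \<and> j < length Bs \<and> full_at As i \<and> full_at Bs j \<and> drop i As = drop j Bs"
  proof (intro exI conjI)
    show "full_at As (length As - Suc k)" "full_at Bs (length Bs - Suc k)"
      using k(3,4) lengths unfolding full_at_def by (simp_all add: Suc_diff_Suc)
    show "drop (length As - Suc k) As = drop (length Bs - Suc k) Bs"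
      using drop_eq_iff_nth_from_end[OF lengths] k(2) by blast
  qed (use lengths in auto)
next
  assume "\<exists>i j. i < length As \<and> j < length Bs \<and> full_at As i \<and> full_at Bs j \<and> drop i As = drop j Bs"
  then obtain i j where ij: "i < length As" "j < length Bs" "full_at As i" "full_at Bs j"
    "drop i As = drop j Bs" by blast
  define k where "k = length As - Suc i"
  have "length As - i = length Bs - j"
    using arg_cong[OF ij(5), of length] by simp
  then have i_eq: "i = length As - Suc k" and j_eq: "j = length Bs - Suc k"
    and lengths: "k < length As" "k < length Bs"
    using ij(1,2) unfolding k_def by auto
  have "\<forall>i'\<le>k. As ! (length As - 1 - i') = Bs ! (length Bs - 1 - i')"
    using drop_eq_iff_nth_from_end[OF lengths] ij(5) unfolding i_eq j_eq by blast
  moreover have "cy (take (length As - 1 - k + 1) As) = As ! (length As - 1 - k)"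
    "cy (take (length Bs - 1 - k + 1) Bs) = Bs ! (length Bs - 1 - k)"
    using ij(3,4) lengths unfolding i_eq j_eq full_at_def by (simp_all add: Suc_diff_Suc)
  ultimately show "csim T h \<tau> F As Bs"
    unfolding csim_def Let_def using lengths
    by (intro exI[of _ k]) (auto simp: min_def)
qed

lemma csim_iff_significant_part:
  assumes As: "word As" and Bs: "word Bs"
  shows "csim T h \<tau> F As Bs \<longleftrightarrow> significant_part As = significant_part Bs"
proof
  assume "csim T h \<tau> F As Bs"
  then obtain i j where ij: "i < length As" "j < length Bs" "full_at As i" "full_at Bs j"
    "drop i As = drop j Bs"
    unfolding csim_iff_common_suffix[OF assms] by blast
  then show "significant_part As = significant_part Bs"
    using significant_part_drop[OF As] significant_part_drop[OF Bs] by metis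
next
  assume "significant_part As = significant_part Bs"
  then show "csim T h \<tau> F As Bs"
    unfolding csim_iff_common_suffix[OF assms] significant_part_def
    using last_full[OF As] last_full[OF Bs] by blast
qed

lemma word_height_eq:
  assumes w: "word w" shows "word_height T h \<tau> F w = length (significant_part w) - 1"
proof -
  have "(GREATEST i. i < length w \<and> csim T h \<tau> F w (drop i w)) = last_full w"
  proof (rule Greatest_equality)
    show "last_full w < length w \<and> csim T h \<tau> F w (drop (last_full w) w)"
      using last_full(1,2)[OF w] significant_part_drop[OF w]
      by (simp add: csim_iff_significant_part[OF w word_drop[OF w]])
  next
    fix i assume i: "i < length w \<and> csim T h \<tau> F w (drop i w)"
    then have w': "word (drop i w)" and sig: "significant_part (drop i w) = significant_part w"
      using word_drop[OF w] csim_iff_significant_part[OF w] by auto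
    have "length w - last_full w = length (drop i w) - last_full (drop i w)"
      using arg_cong[OF sig, of length] unfolding significant_part_def by simp
    then show "i \<le> last_full w"
      using last_full(1)[OF w'] last_full(1)[OF w] by simp
  qed
  then show ?thesis
    unfolding word_height_def significant_part_def by simp
qed

lemma significant_part_snoc:
  assumes w: "word w" and A: "A \<in> P"
  shows "significant_part (w @ [A]) = (if cy (w @ [A]) = A then [A] else significant_part w @ [A])"
proof -
  have w': "word (w @ [A])" by (rule word_snoc[OF w A])
  have full_snoc: "full_at (w @ [A]) j \<longleftrightarrow> full_at w j" if "j < length w" for j
    using that unfolding full_at_def by (simp add: nth_append)
  show ?thesis
  proof (cases "cy (w @ [A]) = A")
    case True
    then have "full_at (w @ [A]) (length w)"
      unfolding full_at_def by simp
    then have "last_full (w @ [A]) = length w"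
      using last_full[OF w'] by (intro le_antisym) simp_all
    with True show ?thesis
      unfolding significant_part_def by simp
  next
    case False
    then have "\<not> full_at (w @ [A]) (length w)"
      unfolding full_at_def by simp
    then have "last_full (w @ [A]) = last_full w"
      using last_full[OF w'] last_full[OF w] full_snoc
      by (intro le_antisym) (simp_all, metis less_Suc_eq)
    with False show ?thesis
      unfolding significant_part_def using last_full(1)[OF w] by simp
  qed
qed

section \<open>The covering graph\<close>

abbreviation "class \<equiv> cls T h \<tau> F P"
abbreviation "height \<equiv> cg_height T h \<tau> F"

lemma mem_cls_iff:
  assumes "word As" shows "Bs \<in> class As \<longleftrightarrow> word Bs \<and> significant_part As = significant_part Bs"
proof -
  have "Bs \<in> class As \<longleftrightarrow> word Bs \<and> csim T h \<tau> F As Bs"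
    unfolding cls_def word_def by simp
  also have "\<dots> \<longleftrightarrow> word Bs \<and> significant_part As = significant_part Bs"
    using csim_iff_significant_part[OF assms] by (rule conj_cong[OF refl])
  finally show ?thesis .
qed

lemma cls_eq_iff:
  assumes "word As" "word Bs"
  shows "class As = class Bs \<longleftrightarrow> significant_part As = significant_part Bs"
proof
  assume "class As = class Bs"
  moreover have "Bs \<in> class Bs"
    using mem_cls_iff[OF assms(2)] assms(2) by simp
  ultimately show "significant_part As = significant_part Bs"
    using mem_cls_iff[OF assms(1)] by simp
next
  assume "significant_part As = significant_part Bs"
  then show "class As = class Bs"
    unfolding set_eq_iff using mem_cls_iff[OF assms(1)] mem_cls_iff[OF assms(2)] by simp
qed

lemma cg_height_cls: "word As \<Longrightarrow> height (class As) = length (significant_part As) - 1"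
  unfolding cg_height_def using someI[of "\<lambda>Bs. Bs \<in> class As" As]
  by (simp add: mem_cls_iff word_height_eq)

lemma cg_height_snoc:
  assumes "word w" "A \<in> P"
  shows "height (class (w @ [A])) = (if cy (w @ [A]) = A then 0 else height (class w) + 1)"
proof -
  have "significant_part w \<noteq> []"
    using last_full(1)[OF assms(1)] unfolding significant_part_def by simp
  then show ?thesis
    using cg_height_cls[OF assms(1)] cg_height_cls[OF word_snoc[OF assms]]
    by (simp add: significant_part_snoc[OF assms])
qed

lemma cyl_nonempty_if_vertex:
  assumes "word As" "class As \<in> cg_vertices T h \<tau> F P" shows "cy As \<noteq> {}"
proof -
  obtain Bs where Bs: "word Bs" "cy Bs \<noteq> {}" "class As = class Bs"
    using assms(2) unfolding cg_vertices_def word_def by blast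
  then have "cy As = cy Bs"
    using cls_eq_iff[OF assms(1)] cyl_significant_part assms(1) by metis
  with Bs show ?thesis by simp
qed

lemma cg_arrowE:
  assumes "cg_arrow T h \<tau> F P \<alpha> \<beta>"
  obtains As A where "word As" "A \<in> P" "\<alpha> = class As" "\<beta> = class (As @ [A])"
    "\<beta> \<in> cg_vertices T h \<tau> F P"
  using assms unfolding cg_arrow_def word_def by blast

lemma cg_arrow_height:
  assumes "cg_arrow T h \<tau> F P \<alpha> \<beta>" "0 < height \<beta>"
  shows "height \<beta> = height \<alpha> + 1"
proof -
  obtain As A where "word As" "A \<in> P" "\<alpha> = class As" "\<beta> = class (As @ [A])"
    using cg_arrowE[OF assms(1)] by blast
  with assms(2) show ?thesis
    using cg_height_snoc by (simp split: if_splits)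
qed

lemma cyl_snoc_off_basis:
  assumes w: "word w" and A: "A \<in> P"
    and "class (w @ [A]) \<in> cg_vertices T h \<tau> F P" "class (w @ [A]) \<notin> cg_basis T h \<tau> F P"
  shows "cy (w @ [A]) \<notin> {{}, A}"
proof -
  have "height (class (w @ [A])) \<noteq> 0"
    using assms(3,4) unfolding cg_basis_def by simp
  then have "cy (w @ [A]) \<noteq> A"
    using cg_height_snoc[OF w A] by auto
  moreover have "cy (w @ [A]) \<noteq> {}"
    by (rule cyl_nonempty_if_vertex[OF word_snoc[OF w A] assms(3)])
  ultimately show ?thesis by simp
qed

lemma cg_arrow_off_basis_unique:
  assumes "cg_arrow T h \<tau> F P \<alpha> \<beta>" "\<beta> \<notin> cg_basis T h \<tau> F P"
    and "cg_arrow T h \<tau> F P \<alpha> \<beta>'" "\<beta>' \<notin> cg_basis T h \<tau> F P"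
  shows "\<beta> = \<beta>'"
proof -
  obtain As A where As: "word As" "A \<in> P" "\<alpha> = class As" "\<beta> = class (As @ [A])"
    "\<beta> \<in> cg_vertices T h \<tau> F P"
    using cg_arrowE[OF assms(1)] by blast
  obtain As' A' where As': "word As'" "A' \<in> P" "\<alpha> = class As'" "\<beta>' = class (As' @ [A'])"
    "\<beta>' \<in> cg_vertices T h \<tau> F P"
    using cg_arrowE[OF assms(3)] by blast
  have sig_eq: "significant_part As' = significant_part As"
    using cls_eq_iff As(1,3) As'(1,3) by simp
  then have "cy As' = cy As"
    using cyl_significant_part[OF As(1)] cyl_significant_part[OF As'(1)] by simp
  then have same_step: "cy (As' @ [B]) = cy (As @ [B])" for B
    using cyl_snoc As(1) As'(1) by simp
  obtain E where E: "down_closed E" "\<forall>B\<in>P. cy (As @ [B]) = B \<inter> \<gamma> (l (last As)) ` E"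
    using cyl_snoc_shape[OF As(1)] by blast
  have cuts: "cy (As @ [A]) \<notin> {{}, A}" "cy (As @ [A']) \<notin> {{}, A'}"
    using cyl_snoc_off_basis[OF As(1,2)] cyl_snoc_off_basis[OF As'(1,2)] same_step
      As(4,5) As'(4,5) assms(2,4) by auto
  have "last As \<in> P"
    using As(1) unfolding word_def by auto
  then have "A = A'"
    using partition_cut_unique[OF partition_element(1) E(1) As(2) As'(2)] cuts E(2) As(2) As'(2)
    by simp
  moreover have "significant_part (As' @ [A]) = significant_part (As @ [A])"
    using significant_part_snoc[OF As(1,2)] significant_part_snoc[OF As'(1) As(2)]
      sig_eq same_step cuts(1) by simp
  ultimately show ?thesis
    using cls_eq_iff[OF word_snoc[OF As(1,2)] word_snoc[OF As'(1) As(2)]] As(4) As'(4) by simp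
qed

end

theorem mainTheorem7:
  fixes T :: "'a topology" and h :: "real \<Rightarrow> 'a" and \<tau> F :: "'a \<Rightarrow> 'a"
    and \<Lambda> :: "'i set" and \<gamma> :: "'i \<Rightarrow> real \<Rightarrow> 'a"
    and P :: "'a set set" and l :: "'a set \<Rightarrow> 'i" and p :: "'a set \<Rightarrow> int"
    and \<alpha> :: "'a set list set"
  assumes "lifted_graph T h \<tau>"
    and "continuous_map T T F"
    and "degree_one T \<tau> F"
    and "sun_like T h F \<Lambda> \<gamma>"
    and "basic_partition T h \<tau> F \<Lambda> \<gamma> P l p"
    and "\<alpha> \<in> cg_vertices T h \<tau> F P"
  shows "(\<forall>\<beta> \<beta>'. cg_arrow T h \<tau> F P \<alpha> \<beta> \<and> \<beta> \<notin> cg_basis T h \<tau> F P \<and>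
                 cg_arrow T h \<tau> F P \<alpha> \<beta>' \<and> \<beta>' \<notin> cg_basis T h \<tau> F P \<longrightarrow> \<beta> = \<beta>')
       \<and> (\<forall>\<beta>. cg_arrow T h \<tau> F P \<alpha> \<beta> \<and> cg_height T h \<tau> F \<beta> > 0 \<longrightarrow>
                 cg_height T h \<tau> F \<beta> = cg_height T h \<tau> F \<alpha> + 1)"
proof -
  have "homeomorphic_map T T \<tau>"
    using assms(1) unfolding lifted_graph_def by blast
  then interpret sun_like_partition T \<tau> F h \<Lambda> \<gamma> P l p
    using assms(1-5) by unfold_locales
  show ?thesis
    using cg_arrow_off_basis_unique cg_arrow_height by blast
qed

end
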